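(* Let $G$ be a cubical $\omega$-category with connections. If $x\in\Phi_n(G_n)$ and $1\le m\le n$, then $\partial^\alpha_mx=\varepsilon_1^{m-1}(\partial^\alpha_1)^mx$ and $\varepsilon_m\partial^\alpha_mx=\varepsilon_1^m(\partial^\alpha_1)^mx$, for $\alpha=\pm$.
   Context: A cubical $\omega$-category with connections $G$ consists of sets $G_n$ ($n\ge0$), face maps $\partial^\alpha_i:G_n\to G_{n-1}$, degeneracies $\varepsilon_i:G_{n-1}\to G_n$, connections $\Gamma^\alpha_i:G_n\to G_{n+1}$ ($1\le i\le n$, $\alpha=\pm$) and partial compositions $\circ_j$ on $G_n$ ($1\le j\le n$, $a\circ_jb$ defined iff $\partial^+_ja=\partial^-_jb$) satisfying: $\partial^\alpha_i\partial^\beta_j=\partial^\beta_{j-1}\partial^\alpha_i$ ($i<j$), $\varepsilon_i\varepsilon_j=\varepsilon_{j+1}\varepsilon_i$ ($i\le j$), $\partial^\alpha_i\varepsilon_j=\varepsilon_{j-1}\partial^\alpha_i$ ($i<j$), $\varepsilon_j\partial^\alpha_{i-1}$ ($i>j$), $\mathrm{id}$ ($i=j$); $\Gamma^\alpha_i\Gamma^\beta_j=\Gamma^\beta_{j+1}\Gamma^\alpha_i$ ($i<j$), $\Gamma^\alpha_i\Gamma^\alpha_i=\Gamma^\alpha_{i+1}\Gamma^\alpha_i$, $\Gamma^\alpha_i\varepsilon_j=\varepsilon_{j+1}\Gamma^\alpha_i$ ($i<j$), $\varepsilon_j\Gamma^\alpha_{i-1}$ ($i>j$), $\Gamma^\alpha_j\varepsilon_j=\varepsilon_{j+1}\varepsilon_j$,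 $\partial^\alpha_i\Gamma^\beta_j=\Gamma^\beta_{j-1}\partial^\alpha_i$ ($i<j$), $\Gamma^\beta_j\partial^\alpha_{i-1}$ ($i>j+1$), $\partial^\alpha_j\Gamma^\alpha_j=\partial^\alpha_{j+1}\Gamma^\alpha_j=\mathrm{id}$, $\partial^\alpha_j\Gamma^{-\alpha}_j=\partial^\alpha_{j+1}\Gamma^{-\alpha}_j=\varepsilon_j\partial^\alpha_j$; $\partial^-_j(a\circ_jb)=\partial^-_ja$, $\partial^+_j(a\circ_jb)=\partial^+_jb$, $\partial^\alpha_i(a\circ_jb)=\partial^\alpha_ia\circ_{j-1}\partial^\alpha_ib$ ($i<j$), $\partial^\alpha_ia\circ_j\partial^\alpha_ib$ ($i>j$); interchange for $i\ne j$; $\varepsilon_i(a\circ_jb)=\varepsilon_ia\circ_{j+1}\varepsilon_ib$ ($i\le j$), $\varepsilon_ia\circ_j\varepsilon_ib$ ($i>j$); $\Gamma^\alpha_i(a\circ_jb)=\Gamma^\alpha_ia\circ_{j+1}\Gamma^\alpha_ib$ ($i<j$), $\Gamma^\alpha_ia\circ_j\Gamma^\alpha_ib$ ($i>j$); $\Gamma^+_j(a\circ_jb)=(\Gamma^+_ja\circ_j\varepsilon_ja)\circ_{j+1}(\varepsilon_{j+1}a\circ_j\Gamma^+_jb)$, $\Gamma^-_j(a\circ_jb)=(\Gamma^-_ja\circ_j\varepsilon_{j+1}b)\circ_{j+1}(\varepsilon_jb\circ_j\Gamma^-_jb)$; each $\circ_j$ is a category structure with identities $\varepsilon_jy$; $\Gamma^+_ix\circ_i\Gamma^-_ix=\varepsilon_{i+1}x$,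 $\Gamma^+_ix\circ_{i+1}\Gamma^-_ix=\varepsilon_ix$. Folding operations on $G_n$: $\psi_ix=\Gamma^+_i\partial^-_{i+1}x\circ_{i+1}x\circ_{i+1}\Gamma^-_i\partial^+_{i+1}x$ ($1\le i\le n-1$), $\Psi_r=\psi_{r-1}\cdots\psi_1$, $\Phi_n=\Psi_1\Psi_2\cdots\Psi_n$. *)

theory Defs
  imports Main
begin

text \<open>
  Cells of dimension n form the set C n.
  Operations carry the dimension of their source explicitly:
    F n i a x  : face  \<partial>^a_i : G_n \<rightarrow> G_(n-1)      (1 \<le> i \<le> n)
    D n i x    : degeneracy \<epsilon>_i : G_(n-1) \<rightarrow> G_n (1 \<le> i \<le> n)   (indexed by TARGET dimension n)
    K n i a x  : connection \<Gamma>^a_i : G_n \<rightarrow> G_(n+1) (1 \<le> i \<le> n)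
    P n j x y  : composite x \<circ>_j y in G_n (1 \<le> j \<le> n), meaningful iff F n j True x = F n j False y.
  The sign alpha is a boolean: True means +, False means -.
\<close>

locale cubical_omega_cat_conn =
  fixes C :: "nat \<Rightarrow> 'a set"
    and F :: "nat \<Rightarrow> nat \<Rightarrow> bool \<Rightarrow> 'a \<Rightarrow> 'a"
    and D :: "nat \<Rightarrow> nat \<Rightarrow> 'a \<Rightarrow> 'a"
    and K :: "nat \<Rightarrow> nat \<Rightarrow> bool \<Rightarrow> 'a \<Rightarrow> 'a"
    and P :: "nat \<Rightarrow> nat \<Rightarrow> 'a \<Rightarrow> 'a \<Rightarrow> 'a"
  assumes face_closed: "\<And>n i a x. x \<in> C n \<Longrightarrow> 1 \<le> i \<Longrightarrow> i \<le> n \<Longrightarrow> F n i a x \<in> C (n - 1)"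
    and degen_closed: "\<And>n i x. x \<in> C (n - 1) \<Longrightarrow> 1 \<le> i \<Longrightarrow> i \<le> n \<Longrightarrow> D n i x \<in> C n"
    and conn_closed: "\<And>n i a x. x \<in> C n \<Longrightarrow> 1 \<le> i \<Longrightarrow> i \<le> n \<Longrightarrow> K n i a x \<in> C (Suc n)"
    and comp_closed: "\<And>n j x y. x \<in> C n \<Longrightarrow> y \<in> C n \<Longrightarrow> 1 \<le> j \<Longrightarrow> j \<le> n \<Longrightarrow>
        F n j True x = F n j False y \<Longrightarrow> P n j x y \<in> C n"
    and face_face: "\<And>n i j a b x. x \<in> C n \<Longrightarrow> 1 \<le> i \<Longrightarrow> i < j \<Longrightarrow> j \<le> n \<Longrightarrow>
        F (n - 1) i a (F n j b x) = F (n - 1) (j - 1) b (F n i a x)"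
    and degen_degen: "\<And>n i j x. x \<in> C n \<Longrightarrow> 1 \<le> i \<Longrightarrow> i \<le> j \<Longrightarrow> j \<le> n + 1 \<Longrightarrow>
        D (n + 2) i (D (n + 1) j x) = D (n + 2) (j + 1) (D (n + 1) i x)"
    and face_degen_lt: "\<And>n i j a x. x \<in> C n \<Longrightarrow> 1 \<le> i \<Longrightarrow> i < j \<Longrightarrow> j \<le> n + 1 \<Longrightarrow>
        F (n + 1) i a (D (n + 1) j x) = D n (j - 1) (F n i a x)"
    and face_degen_gt: "\<And>n i j a x. x \<in> C n \<Longrightarrow> 1 \<le> j \<Longrightarrow> j < i \<Longrightarrow> i \<le> n + 1 \<Longrightarrow>
        F (n + 1) i a (D (n + 1) j x) = D n j (F n (i - 1) a x)"
    and face_degen_eq: "\<And>n i a x. x \<in> C n \<Longrightarrow> 1 \<le> i \<Longrightarrow> i \<le> n + 1 \<Longrightarrow>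
        F (n + 1) i a (D (n + 1) i x) = x"
    and conn_conn: "\<And>n i j a b x. x \<in> C n \<Longrightarrow> 1 \<le> i \<Longrightarrow> i < j \<Longrightarrow> j \<le> n \<Longrightarrow>
        K (n + 1) i a (K n j b x) = K (n + 1) (j + 1) b (K n i a x)"
    and conn_conn_eq: "\<And>n i a x. x \<in> C n \<Longrightarrow> 1 \<le> i \<Longrightarrow> i \<le> n \<Longrightarrow>
        K (n + 1) i a (K n i a x) = K (n + 1) (i + 1) a (K n i a x)"
    and conn_degen_lt: "\<And>n i j a x. x \<in> C n \<Longrightarrow> 1 \<le> i \<Longrightarrow> i < j \<Longrightarrow> j \<le> n + 1 \<Longrightarrow>
        K (n + 1) i a (D (n + 1) j x) = D (n + 2) (j + 1) (K n i a x)"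
    and conn_degen_gt: "\<And>n i j a x. x \<in> C n \<Longrightarrow> 1 \<le> j \<Longrightarrow> j < i \<Longrightarrow> i \<le> n + 1 \<Longrightarrow>
        K (n + 1) i a (D (n + 1) j x) = D (n + 2) j (K n (i - 1) a x)"
    and conn_degen_eq: "\<And>n j a x. x \<in> C n \<Longrightarrow> 1 \<le> j \<Longrightarrow> j \<le> n + 1 \<Longrightarrow>
        K (n + 1) j a (D (n + 1) j x) = D (n + 2) (j + 1) (D (n + 1) j x)"
    and face_conn_lt: "\<And>n i j a b x. x \<in> C n \<Longrightarrow> 1 \<le> i \<Longrightarrow> i < j \<Longrightarrow> j \<le> n \<Longrightarrow>
        F (n + 1) i a (K n j b x) = K (n - 1) (j - 1) b (F n i a x)"
    and face_conn_gt: "\<And>n i j a b x. x \<in> C n \<Longrightarrow> 1 \<le> j \<Longrightarrow> j + 1 < i \<Longrightarrow> i \<le> n + 1 \<Longrightarrow>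
        F (n + 1) i a (K n j b x) = K (n - 1) j b (F n (i - 1) a x)"
    and face_conn_same1: "\<And>n j a x. x \<in> C n \<Longrightarrow> 1 \<le> j \<Longrightarrow> j \<le> n \<Longrightarrow>
        F (n + 1) j a (K n j a x) = x"
    and face_conn_same2: "\<And>n j a x. x \<in> C n \<Longrightarrow> 1 \<le> j \<Longrightarrow> j \<le> n \<Longrightarrow>
        F (n + 1) (j + 1) a (K n j a x) = x"
    and face_conn_opp1: "\<And>n j a x. x \<in> C n \<Longrightarrow> 1 \<le> j \<Longrightarrow> j \<le> n \<Longrightarrow>
        F (n + 1) j a (K n j (\<not> a) x) = D n j (F n j a x)"
    and face_conn_opp2: "\<And>n j a x. x \<in> C n \<Longrightarrow> 1 \<le> j \<Longrightarrow> j \<le> n \<Longrightarrow>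
        F (n + 1) (j + 1) a (K n j (\<not> a) x) = D n j (F n j a x)"
    and face_comp_minus: "\<And>n j x y. x \<in> C n \<Longrightarrow> y \<in> C n \<Longrightarrow> 1 \<le> j \<Longrightarrow> j \<le> n \<Longrightarrow>
        F n j True x = F n j False y \<Longrightarrow> F n j False (P n j x y) = F n j False x"
    and face_comp_plus: "\<And>n j x y. x \<in> C n \<Longrightarrow> y \<in> C n \<Longrightarrow> 1 \<le> j \<Longrightarrow> j \<le> n \<Longrightarrow>
        F n j True x = F n j False y \<Longrightarrow> F n j True (P n j x y) = F n j True y"
    and face_comp_lt: "\<And>n i j a x y. x \<in> C n \<Longrightarrow> y \<in> C n \<Longrightarrow> 1 \<le> i \<Longrightarrow> i < j \<Longrightarrow> j \<le> n \<Longrightarrow>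
        F n j True x = F n j False y \<Longrightarrow>
        F n i a (P n j x y) = P (n - 1) (j - 1) (F n i a x) (F n i a y)"
    and face_comp_gt: "\<And>n i j a x y. x \<in> C n \<Longrightarrow> y \<in> C n \<Longrightarrow> 1 \<le> j \<Longrightarrow> j < i \<Longrightarrow> i \<le> n \<Longrightarrow>
        F n j True x = F n j False y \<Longrightarrow>
        F n i a (P n j x y) = P (n - 1) j (F n i a x) (F n i a y)"
    and interchange: "\<And>n i j w x y z. w \<in> C n \<Longrightarrow> x \<in> C n \<Longrightarrow> y \<in> C n \<Longrightarrow> z \<in> C n \<Longrightarrow>
        1 \<le> i \<Longrightarrow> i \<le> n \<Longrightarrow> 1 \<le> j \<Longrightarrow> j \<le> n \<Longrightarrow> i \<noteq> j \<Longrightarrow>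
        F n i True w = F n i False x \<Longrightarrow> F n i True y = F n i False z \<Longrightarrow>
        F n j True w = F n j False y \<Longrightarrow> F n j True x = F n j False z \<Longrightarrow>
        P n j (P n i w x) (P n i y z) = P n i (P n j w y) (P n j x z)"
    and degen_comp_le: "\<And>n i j x y. x \<in> C n \<Longrightarrow> y \<in> C n \<Longrightarrow> 1 \<le> i \<Longrightarrow> i \<le> j \<Longrightarrow> j \<le> n \<Longrightarrow>
        F n j True x = F n j False y \<Longrightarrow>
        D (n + 1) i (P n j x y) = P (n + 1) (j + 1) (D (n + 1) i x) (D (n + 1) i y)"
    and degen_comp_gt: "\<And>n i j x y. x \<in> C n \<Longrightarrow> y \<in> C n \<Longrightarrow> 1 \<le> j \<Longrightarrow> j < i \<Longrightarrow> i \<le> n + 1 \<Longrightarrow>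
        F n j True x = F n j False y \<Longrightarrow>
        D (n + 1) i (P n j x y) = P (n + 1) j (D (n + 1) i x) (D (n + 1) i y)"
    and conn_comp_lt: "\<And>n i j a x y. x \<in> C n \<Longrightarrow> y \<in> C n \<Longrightarrow> 1 \<le> i \<Longrightarrow> i < j \<Longrightarrow> j \<le> n \<Longrightarrow>
        F n j True x = F n j False y \<Longrightarrow>
        K n i a (P n j x y) = P (n + 1) (j + 1) (K n i a x) (K n i a y)"
    and conn_comp_gt: "\<And>n i j a x y. x \<in> C n \<Longrightarrow> y \<in> C n \<Longrightarrow> 1 \<le> j \<Longrightarrow> j < i \<Longrightarrow> i \<le> n \<Longrightarrow>
        F n j True x = F n j False y \<Longrightarrow>
        K n i a (P n j x y) = P (n + 1) j (K n i a x) (K n i a y)"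
    and conn_comp_plus: "\<And>n j x y. x \<in> C n \<Longrightarrow> y \<in> C n \<Longrightarrow> 1 \<le> j \<Longrightarrow> j \<le> n \<Longrightarrow>
        F n j True x = F n j False y \<Longrightarrow>
        K n j True (P n j x y) =
          P (n + 1) (j + 1) (P (n + 1) j (K n j True x) (D (n + 1) j x))
                            (P (n + 1) j (D (n + 1) (j + 1) x) (K n j True y))"
    and conn_comp_minus: "\<And>n j x y. x \<in> C n \<Longrightarrow> y \<in> C n \<Longrightarrow> 1 \<le> j \<Longrightarrow> j \<le> n \<Longrightarrow>
        F n j True x = F n j False y \<Longrightarrow>
        K n j False (P n j x y) =
          P (n + 1) (j + 1) (P (n + 1) j (K n j False x) (D (n + 1) (j + 1) y))
                            (P (n + 1) j (D (n + 1) j y) (K n j False y))"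
    and comp_assoc: "\<And>n j x y z. x \<in> C n \<Longrightarrow> y \<in> C n \<Longrightarrow> z \<in> C n \<Longrightarrow> 1 \<le> j \<Longrightarrow> j \<le> n \<Longrightarrow>
        F n j True x = F n j False y \<Longrightarrow> F n j True y = F n j False z \<Longrightarrow>
        P n j (P n j x y) z = P n j x (P n j y z)"
    and comp_left_id: "\<And>n j x. x \<in> C n \<Longrightarrow> 1 \<le> j \<Longrightarrow> j \<le> n \<Longrightarrow>
        P n j (D n j (F n j False x)) x = x"
    and comp_right_id: "\<And>n j x. x \<in> C n \<Longrightarrow> 1 \<le> j \<Longrightarrow> j \<le> n \<Longrightarrow>
        P n j x (D n j (F n j True x)) = x"
    and conn_cancel1: "\<And>n i x. x \<in> C n \<Longrightarrow> 1 \<le> i \<Longrightarrow> i \<le> n \<Longrightarrow>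
        P (n + 1) i (K n i True x) (K n i False x) = D (n + 1) (i + 1) x"
    and conn_cancel2: "\<And>n i x. x \<in> C n \<Longrightarrow> 1 \<le> i \<Longrightarrow> i \<le> n \<Longrightarrow>
        P (n + 1) (i + 1) (K n i True x) (K n i False x) = D (n + 1) i x"

text \<open>Folding operation \<psi>_i on G_n (1 \<le> i \<le> n-1):
  \<psi>_i x = \<Gamma>^+_i \<partial>^-_(i+1) x \<circ>_(i+1) x \<circ>_(i+1) \<Gamma>^-_i \<partial>^+_(i+1) x
  (bracketed to the left; composition is associative).\<close>
definition psi ::
  "(nat \<Rightarrow> nat \<Rightarrow> bool \<Rightarrow> 'a \<Rightarrow> 'a) \<Rightarrow> (nat \<Rightarrow> nat \<Rightarrow> bool \<Rightarrow> 'a \<Rightarrow> 'a) \<Rightarrow>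
   (nat \<Rightarrow> nat \<Rightarrow> 'a \<Rightarrow> 'a \<Rightarrow> 'a) \<Rightarrow> nat \<Rightarrow> nat \<Rightarrow> 'a \<Rightarrow> 'a" where
  "psi F K P n i x =
     P n (i + 1) (P n (i + 1) (K (n - 1) i True (F n (i + 1) False x)) x)
                 (K (n - 1) i False (F n (i + 1) True x))"

primrec psi_upto ::
  "(nat \<Rightarrow> nat \<Rightarrow> bool \<Rightarrow> 'a \<Rightarrow> 'a) \<Rightarrow> (nat \<Rightarrow> nat \<Rightarrow> bool \<Rightarrow> 'a \<Rightarrow> 'a) \<Rightarrow>
   (nat \<Rightarrow> nat \<Rightarrow> 'a \<Rightarrow> 'a \<Rightarrow> 'a) \<Rightarrow> nat \<Rightarrow> nat \<Rightarrow> 'a \<Rightarrow> 'a" where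
  "psi_upto F K P n 0 x = x"
| "psi_upto F K P n (Suc k) x = psi F K P n (Suc k) (psi_upto F K P n k x)"

text \<open>\<Psi>_r = \<psi>_(r-1) \<circ> ... \<circ> \<psi>_1 (so \<Psi>_1 = id).\<close>
definition Psi where
  "Psi F K P n r = psi_upto F K P n (r - 1)"

primrec Phi_upto ::
  "(nat \<Rightarrow> nat \<Rightarrow> bool \<Rightarrow> 'a \<Rightarrow> 'a) \<Rightarrow> (nat \<Rightarrow> nat \<Rightarrow> bool \<Rightarrow> 'a \<Rightarrow> 'a) \<Rightarrow>
   (nat \<Rightarrow> nat \<Rightarrow> 'a \<Rightarrow> 'a \<Rightarrow> 'a) \<Rightarrow> nat \<Rightarrow> nat \<Rightarrow> 'a \<Rightarrow> 'a" where
  "Phi_upto F K P n 0 x = x"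
| "Phi_upto F K P n (Suc k) x = Phi_upto F K P n k (Psi F K P n (Suc k) x)"

definition Phi where
  "Phi F K P n = Phi_upto F K P n n"

primrec face1_iter :: "(nat \<Rightarrow> nat \<Rightarrow> bool \<Rightarrow> 'a \<Rightarrow> 'a) \<Rightarrow> nat \<Rightarrow> nat \<Rightarrow> bool \<Rightarrow> 'a \<Rightarrow> 'a" where
  "face1_iter F n 0 a x = x"
| "face1_iter F n (Suc k) a x = F (n - k) 1 a (face1_iter F n k a x)"

text \<open>\<epsilon>_1^k y for y \<in> G_d (result in G_(d+k)).\<close>
primrec degen1_iter :: "(nat \<Rightarrow> nat \<Rightarrow> 'a \<Rightarrow> 'a) \<Rightarrow> nat \<Rightarrow> nat \<Rightarrow> 'a \<Rightarrow> 'a" where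
  "degen1_iter D d 0 y = y"
| "degen1_iter D d (Suc k) y = D (d + Suc k) 1 (degen1_iter D d k y)"

end

theory Submission
  imports Defs
begin

text \<open>
  The folding psi_i x = Gamma+_i d-_(i+1) x o_(i+1) x o_(i+1) Gamma-_i d+_(i+1) x commutes with
  the faces d_j for j > i + 1, while d_(i+1) psi_i = eps_i d_i d_(i+1). By induction on m, the
  face d_m (Psi_m y) is therefore of the form eps_1^(m-1) z. Each psi_i with i <= k fixes
  eps_1^k z: for i = 1 both connection factors are identities, and psi_(i+1) eps_1 = eps_1 psi_i.
  Writing x = Phi_n x0 = Psi_1 ... Psi_m y, the face d_m passes through Psi_1, ..., Psi_(m-1),
  which then fix eps_1^(m-1) z, so d_m x = eps_1^(m-1) z. Applying (d_1)^(m-1) identifies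
  z = (d_1)^m x, and eps_m eps_1^(m-1) = eps_1^m gives the second identity.
\<close>

context cubical_omega_cat_conn
begin

lemma face1_iter_closed: "x \<in> C n \<Longrightarrow> k \<le> n \<Longrightarrow> face1_iter F n k a x \<in> C (n - k)"
proof (induction k)
  case 0
  then show ?case by simp
next
  case (Suc k)
  then have "face1_iter F n k a x \<in> C (n - k)" "1 \<le> n - k" by simp_all
  then show ?case using face_closed[of "face1_iter F n k a x" "n - k" 1 a] by simp
qed

lemma degen1_iter_closed: "z \<in> C d \<Longrightarrow> degen1_iter D d k z \<in> C (d + k)"
  by (induction k) (simp_all add: degen_closed)

context
  fixes n j x y z
  assumes xyz: "x \<in> C n" "y \<in> C n" "z \<in> C n" and j: "1 \<le> j" "j \<le> n"
    and composable: "F n j True x = F n j False y" "F n j True y = F n j False z"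
begin

lemma comp3_composable: "F n j True (P n j x y) = F n j False z"
  using face_comp_plus[OF xyz(1,2) j composable(1)] composable(2) by simp

lemma comp3_closed: "P n j (P n j x y) z \<in> C n"
  using comp_closed[OF comp_closed[OF xyz(1,2) j composable(1)] xyz(3) j comp3_composable] .

lemma face_comp3_minus: "F n j False (P n j (P n j x y) z) = F n j False x"
  using face_comp_minus[OF comp_closed[OF xyz(1,2) j composable(1)] xyz(3) j comp3_composable]
    face_comp_minus[OF xyz(1,2) j composable(1)] by simp

lemma face_comp3_plus: "F n j True (P n j (P n j x y) z) = F n j True z"
  using face_comp_plus[OF comp_closed[OF xyz(1,2) j composable(1)] xyz(3) j comp3_composable] .

lemma face_comp3_gt:
  assumes "j < i" "i \<le> n"
  shows "F n i a (P n j (P n j x y) z)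
       = P (n - 1) j (P (n - 1) j (F n i a x) (F n i a y)) (F n i a z)"
  using face_comp_gt[OF comp_closed[OF xyz(1,2) j composable(1)] xyz(3) j(1) assms comp3_composable]
    face_comp_gt[OF xyz(1,2) j(1) assms composable(1)] by simp

lemma degen_comp3_le:
  assumes "1 \<le> i" "i \<le> j"
  shows "D (n + 1) i (P n j (P n j x y) z)
       = P (n + 1) (j + 1) (P (n + 1) (j + 1) (D (n + 1) i x) (D (n + 1) i y)) (D (n + 1) i z)"
  using degen_comp_le[OF comp_closed[OF xyz(1,2) j composable(1)] xyz(3) assms j(2) comp3_composable]
    degen_comp_le[OF xyz(1,2) assms j(2) composable(1)] by simp

end

lemma psi_Suc_dim:
  "psi F K P (Suc k) i x =
     P (Suc k) (i + 1) (P (Suc k) (i + 1) (K k i True (F (Suc k) (i + 1) False x)) x)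
                       (K k i False (F (Suc k) (i + 1) True x))"
  by (simp add: psi_def)

context
  fixes k i x
  assumes x: "x \<in> C (Suc k)" and i: "1 \<le> i" "i \<le> k"
begin

lemma psi_factors_closed:
  "K k i True (F (Suc k) (i + 1) False x) \<in> C (Suc k)"
  "K k i False (F (Suc k) (i + 1) True x) \<in> C (Suc k)"
  using conn_closed face_closed[OF x, of "i + 1"] i by simp_all

lemma psi_factors_composable:
  "F (Suc k) (i + 1) True (K k i True (F (Suc k) (i + 1) False x)) = F (Suc k) (i + 1) False x"
  "F (Suc k) (i + 1) False (K k i False (F (Suc k) (i + 1) True x)) = F (Suc k) (i + 1) True x"
  using face_conn_same2 face_closed[OF x, of "i + 1"] i by simp_all

private lemma psi_index: "1 \<le> i + 1" "i + 1 \<le> Suc k"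
  using i by simp_all

private lemmas psi_comp3 = psi_factors_closed(1) x psi_factors_closed(2) psi_index
  psi_factors_composable(1) psi_factors_composable(2)[symmetric]

lemma psi_closed: "psi F K P (Suc k) i x \<in> C (Suc k)"
  unfolding psi_Suc_dim by (rule comp3_closed[OF psi_comp3])

lemma face_psi_succ:
  "F (Suc k) (i + 1) a (psi F K P (Suc k) i x) = D k i (F k i a (F (Suc k) (i + 1) a x))"
proof -
  have "F (Suc k) (i + 1) a (psi F K P (Suc k) i x)
      = F (Suc k) (i + 1) a (K k i (\<not> a) (F (Suc k) (i + 1) a x))"
    unfolding psi_Suc_dim
    by (cases a)
      (simp_all only: face_comp3_plus[OF psi_comp3] face_comp3_minus[OF psi_comp3]
        not_True_eq_False not_False_eq_True)
  also have "\<dots> = D k i (F k i a (F (Suc k) (i + 1) a x))"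
    using face_conn_opp2 face_closed[OF x, of "i + 1"] i by simp
  finally show ?thesis .
qed

lemma face_psi_gt:
  assumes j: "i + 1 < j" "j \<le> Suc k"
  shows "F (Suc k) j a (psi F K P (Suc k) i x) = psi F K P k i (F (Suc k) j a x)"
proof -
  have face_face_x:
    "F k (j - 1) a (F (Suc k) (i + 1) b x) = F k (i + 1) b (F (Suc k) j a x)" for b
    using face_face[OF x, of "i + 1" j] j by simp
  have "F (Suc k) j a (K k i b (F (Suc k) (i + 1) (\<not> b) x))
      = K (k - 1) i b (F k (i + 1) (\<not> b) (F (Suc k) j a x))" for b
    using face_conn_gt[of "F (Suc k) (i + 1) (\<not> b) x" k i j a b] face_closed[OF x, of "i + 1"]
      face_face_x i j by simp
  from this[of True] this[of False] show ?thesis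
    unfolding psi_Suc_dim face_comp3_gt[OF psi_comp3 j]
    by (simp add: psi_def)
qed

lemma psi_Suc_degen_one:
  "psi F K P (Suc (Suc k)) (Suc i) (D (Suc (Suc k)) 1 x)
   = D (Suc (Suc k)) 1 (psi F K P (Suc k) i x)"
proof -
  have "K (Suc k) (Suc i) b (F (Suc (Suc k)) (Suc i + 1) c (D (Suc (Suc k)) 1 x))
      = D (Suc (Suc k)) 1 (K k i b (F (Suc k) (i + 1) c x))" for b c
    using face_degen_gt[OF x, of 1 "Suc i + 1" c] face_closed[OF x, of "i + 1" c] i
      conn_degen_gt[of "F (Suc k) (i + 1) c x" k 1 "Suc i" b] by simp
  moreover have "D (Suc (Suc k)) 1 (psi F K P (Suc k) i x)
      = P (Suc (Suc k)) (Suc i + 1)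
          (P (Suc (Suc k)) (Suc i + 1) (D (Suc (Suc k)) 1 (K k i True (F (Suc k) (i + 1) False x)))
             (D (Suc (Suc k)) 1 x))
          (D (Suc (Suc k)) 1 (K k i False (F (Suc k) (i + 1) True x)))"
    unfolding psi_Suc_dim using degen_comp3_le[OF psi_comp3, of 1] by simp
  ultimately show ?thesis
    unfolding psi_Suc_dim[of "Suc k"] using face_degen_gt[OF x, of 1 "Suc i + 1"] i by simp
qed

end

lemma psi_one_degen_one:
  assumes w: "w \<in> C (Suc k)"
  shows "psi F K P (Suc (Suc k)) 1 (D (Suc (Suc k)) 1 w) = D (Suc (Suc k)) 1 w"
proof -
  let ?n = "Suc (Suc k)" and ?x = "D (Suc (Suc k)) 1 w"
  have x: "?x \<in> C ?n" using degen_closed[of w ?n 1] w by (simp add: numeral_2_eq_2)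
  have faces: "F ?n 2 a ?x = D (Suc k) 1 (F (Suc k) 1 a w)" for a
    using face_degen_gt[OF w, of 1 2] by (simp add: numeral_2_eq_2)
  have "F (Suc k) 1 a w \<in> C k" for a
    using face_closed[OF w, of 1] by simp
  \<comment> \<open>Both connection factors are o_2-identities, since Gamma_1 eps_1 = eps_2 eps_1.\<close>
  then have identities:
    "K (Suc k) 1 b (D (Suc k) 1 (F (Suc k) 1 a w)) = D ?n 2 (D (Suc k) 1 (F (Suc k) 1 a w))" for a b
    using conn_degen_eq[of _ k 1] by (simp add: numeral_2_eq_2)
  have "P ?n 2 (K (Suc k) 1 True (F ?n 2 False ?x)) ?x = ?x"
    using comp_left_id[OF x, of 2] faces identities by (simp add: numeral_2_eq_2)
  moreover have "P ?n 2 ?x (K (Suc k) 1 False (F ?n 2 True ?x)) = ?x"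
    using comp_right_id[OF x, of 2] faces identities by (simp add: numeral_2_eq_2)
  ultimately show ?thesis
    unfolding psi_Suc_dim by (simp add: numeral_2_eq_2)
qed

lemma psi_upto_closed: "x \<in> C n \<Longrightarrow> r < n \<Longrightarrow> psi_upto F K P n r x \<in> C n"
proof (induction r)
  case 0
  then show ?case by simp
next
  case (Suc r)
  then obtain k where "n = Suc k" by (cases n) auto
  with Suc show ?case using psi_closed[of "psi_upto F K P n r x" k "Suc r"] by simp
qed

lemma face_psi_upto:
  "x \<in> C n \<Longrightarrow> r + 1 < j \<Longrightarrow> j \<le> n \<Longrightarrow>
   F n j a (psi_upto F K P n r x) = psi_upto F K P (n - 1) r (F n j a x)"
proof (induction r)
  case 0
  then show ?case by simp
next
  case (Suc r)
  then obtain k where n: "n = Suc k" by (cases n) auto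
  have "psi_upto F K P n r x \<in> C n" using psi_upto_closed Suc.prems by simp
  then show ?case using face_psi_gt[of "psi_upto F K P n r x" k "Suc r" j a] Suc n by simp
qed

lemma Phi_upto_closed: "x \<in> C n \<Longrightarrow> r \<le> n \<Longrightarrow> Phi_upto F K P n r x \<in> C n"
  by (induction r arbitrary: x) (simp_all add: Psi_def psi_upto_closed)

lemma face_Phi_upto:
  "x \<in> C n \<Longrightarrow> r < m \<Longrightarrow> m \<le> n \<Longrightarrow>
   F n m a (Phi_upto F K P n r x) = Phi_upto F K P (n - 1) r (F n m a x)"
proof (induction r arbitrary: x)
  case 0
  then show ?case by simp
next
  case (Suc r)
  have "psi_upto F K P n r x \<in> C n" using psi_upto_closed Suc.prems by simp
  then show ?case using Suc face_psi_upto[of x n r m a] by (simp add: Psi_def)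
qed

lemma Phi_upto_add_mem:
  "x \<in> C n \<Longrightarrow> m + j \<le> n \<Longrightarrow> Phi_upto F K P n (m + j) x \<in> Phi_upto F K P n m ` C n"
proof (induction j arbitrary: x)
  case 0
  then show ?case by simp
next
  case (Suc j)
  have "psi_upto F K P n (m + j) x \<in> C n" using psi_upto_closed Suc.prems by simp
  then show ?case using Suc by (simp add: Psi_def)
qed

lemma degen_degen1_iter:
  "z \<in> C d \<Longrightarrow> D (d + k + 1) (k + 1) (degen1_iter D d k z) = degen1_iter D d (k + 1) z"
proof (induction k)
  case 0
  then show ?case by simp
next
  case (Suc k)
  have w: "degen1_iter D d k z \<in> C (d + k)" using degen1_iter_closed Suc.prems .
  have "D (d + Suc k + 1) (Suc k + 1) (degen1_iter D d (Suc k) z)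
      = D (d + k + 2) (k + 2) (D (d + k + 1) 1 (degen1_iter D d k z))" by simp
  also have "\<dots> = D (d + k + 2) 1 (D (d + k + 1) (k + 1) (degen1_iter D d k z))"
    using degen_degen[OF w, of 1 "k + 1"] by simp
  also have "\<dots> = degen1_iter D d (Suc k + 1) z" using Suc by simp
  finally show ?case .
qed

lemma psi_degen1_iter:
  "z \<in> C d \<Longrightarrow> 1 \<le> i \<Longrightarrow> i \<le> k \<Longrightarrow> i < d + k \<Longrightarrow>
   psi F K P (d + k) i (degen1_iter D d k z) = degen1_iter D d k z"
proof (induction k arbitrary: i)
  case 0
  then show ?case by simp
next
  case (Suc k)
  have w: "degen1_iter D d k z \<in> C (d + k)" using degen1_iter_closed Suc.prems(1) .
  obtain k' where k': "d + k = Suc k'" using Suc.prems by (cases "d + k") auto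
  show ?case
  proof (cases "i = 1")
    case True
    then show ?thesis using psi_one_degen_one[of "degen1_iter D d k z" k'] w k' by simp
  next
    case False
    then obtain i' where i': "i = Suc i'" "1 \<le> i'" using Suc.prems by (cases i) auto
    have "psi F K P (d + Suc k) i (degen1_iter D d (Suc k) z)
        = D (d + Suc k) 1 (psi F K P (d + k) i' (degen1_iter D d k z))"
      using psi_Suc_degen_one[of "degen1_iter D d k z" k' i'] w k' i' Suc.prems by simp
    also have "\<dots> = degen1_iter D d (Suc k) z" using Suc i' by simp
    finally show ?thesis .
  qed
qed

lemma Phi_upto_degen1_iter:
  "z \<in> C d \<Longrightarrow> r \<le> k \<Longrightarrow> Phi_upto F K P (d + k) r (degen1_iter D d k z) = degen1_iter D d k z"
proof (induction r)
  case 0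
  then show ?case by simp
next
  case (Suc r)
  have "psi_upto F K P (d + k) r' (degen1_iter D d k z) = degen1_iter D d k z" if "r' \<le> r" for r'
    using that Suc.prems by (induction r') (simp_all add: psi_degen1_iter)
  then show ?case using Suc by (simp add: Psi_def)
qed

lemma face1_iter_Suc_inner: "face1_iter F n (Suc k) a x = face1_iter F (n - 1) k a (F n 1 a x)"
  by (induction k) simp_all

lemma face1_iter_degen1_iter: "z \<in> C d \<Longrightarrow> face1_iter F (d + k) k a (degen1_iter D d k z) = z"
proof (induction k)
  case 0
  then show ?case by simp
next
  case (Suc k)
  have "degen1_iter D d k z \<in> C (d + k)" using degen1_iter_closed Suc.prems .
  then show ?case
    unfolding face1_iter_Suc_inner using face_degen_eq[of _ "d + k" 1 a] Suc by simp
qed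

lemma face1_iter_face:
  "x \<in> C n \<Longrightarrow> k < j \<Longrightarrow> j \<le> n \<Longrightarrow>
   face1_iter F (n - 1) k a (F n j a x) = F (n - k) (j - k) a (face1_iter F n k a x)"
proof (induction k)
  case 0
  then show ?case by simp
next
  case (Suc k)
  have w: "face1_iter F n k a x \<in> C (n - k)" using face1_iter_closed Suc.prems by simp
  have "face1_iter F (n - 1) (Suc k) a (F n j a x)
      = F (n - k - 1) 1 a (F (n - k) (j - k) a (face1_iter F n k a x))"
    using Suc by simp
  also have "\<dots> = F (n - k - 1) (j - k - 1) a (F (n - k) 1 a (face1_iter F n k a x))"
    using face_face[OF w, of 1 "j - k" a a] Suc.prems by simp
  also have "\<dots> = F (n - Suc k) (j - Suc k) a (face1_iter F n (Suc k) a x)"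
    by simp
  finally show ?case .
qed

lemma face_psi_upto_degenerate:
  "y \<in> C n \<Longrightarrow> 1 \<le> m \<Longrightarrow> m \<le> n \<Longrightarrow>
   F n m a (psi_upto F K P n (m - 1) y) \<in> degen1_iter D (n - m) (m - 1) ` C (n - m)"
proof (induction m arbitrary: n y)
  case 0
  then show ?case by simp
next
  case (Suc m)
  show ?case
  proof (cases "m = 0")
    case True
    then show ?thesis using face_closed[OF Suc.prems(1), of 1 a] Suc.prems by simp
  next
    case False
    obtain k where n: "n = Suc k" using Suc.prems by (cases n) auto
    have m: "1 \<le> m" "m \<le> k" using False Suc.prems n by auto
    have "psi_upto F K P n (m - 1) y \<in> C n" using psi_upto_closed Suc.prems by simp
    moreover have "psi_upto F K P n m y = psi F K P (Suc k) m (psi_upto F K P n (m - 1) y)"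
      using m n by (cases m) auto
    ultimately have "F n (Suc m) a (psi_upto F K P n m y)
        = D k m (F k m a (F n (m + 1) a (psi_upto F K P n (m - 1) y)))"
      using face_psi_succ[of _ k m a] m n by simp
    also have "F n (m + 1) a (psi_upto F K P n (m - 1) y)
        = psi_upto F K P k (m - 1) (F n (m + 1) a y)"
      using face_psi_upto[OF Suc.prems(1), of "m - 1" "m + 1" a] Suc.prems m n by simp
    finally have top: "F n (Suc m) a (psi_upto F K P n m y)
        = D k m (F k m a (psi_upto F K P k (m - 1) (F n (m + 1) a y)))" .
    have "F n (m + 1) a y \<in> C k"
      using face_closed[OF Suc.prems(1), of "m + 1" a] Suc.prems n by simp
    from Suc.IH[OF this m] obtain z where z: "z \<in> C (k - m)"
      "F k m a (psi_upto F K P k (m - 1) (F n (m + 1) a y)) = degen1_iter D (k - m) (m - 1) z"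
      by blast
    have "D (k - m + (m - 1) + 1) (m - 1 + 1) (degen1_iter D (k - m) (m - 1) z)
        = degen1_iter D (k - m) (m - 1 + 1) z"
      using degen_degen1_iter[OF z(1)] .
    then have "D k m (degen1_iter D (k - m) (m - 1) z) = degen1_iter D (k - m) m z"
      using m by simp
    then show ?thesis using top z n by simp
  qed
qed

lemma face_Phi_upto_degenerate:
  assumes y: "y \<in> C n" and m: "1 \<le> m" "m \<le> n"
  shows "F n m a (Phi_upto F K P n m y) \<in> degen1_iter D (n - m) (m - 1) ` C (n - m)"
proof -
  obtain z where z: "z \<in> C (n - m)"
    "F n m a (psi_upto F K P n (m - 1) y) = degen1_iter D (n - m) (m - 1) z"
    using face_psi_upto_degenerate[OF y m] by blast
  have "Phi_upto F K P n m y = Phi_upto F K P n (m - 1) (psi_upto F K P n (m - 1) y)"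
    using m by (cases m) (simp_all add: Psi_def)
  then have "F n m a (Phi_upto F K P n m y)
      = Phi_upto F K P (n - 1) (m - 1) (degen1_iter D (n - m) (m - 1) z)"
    using face_Phi_upto[of _ n "m - 1" m a] psi_upto_closed[OF y] z m by simp
  also have "\<dots> = degen1_iter D (n - m) (m - 1) z"
    using Phi_upto_degen1_iter[OF z(1), of "m - 1" "m - 1"] m by simp
  finally show ?thesis using z(1) by blast
qed

lemma face1_iter_eq_if_face_eq_degen1_iter:
  assumes x: "x \<in> C n" and m: "1 \<le> m" "m \<le> n" and z: "z \<in> C (n - m)"
    and face: "F n m a x = degen1_iter D (n - m) (m - 1) z"
  shows "face1_iter F n m a x = z"
proof -
  have "face1_iter F n m a x = face1_iter F (n - 1) (m - 1) a (F n m a x)"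
    using face1_iter_face[OF x, of "m - 1" m a] m by (cases m) simp_all
  also have "\<dots> = face1_iter F (n - m + (m - 1)) (m - 1) a (degen1_iter D (n - m) (m - 1) z)"
    using face m by simp
  also have "\<dots> = z" using face1_iter_degen1_iter[OF z] .
  finally show ?thesis .
qed

end

theorem proposition3p6:
  fixes C :: "nat \<Rightarrow> 'a set"
    and F :: "nat \<Rightarrow> nat \<Rightarrow> bool \<Rightarrow> 'a \<Rightarrow> 'a"
    and D :: "nat \<Rightarrow> nat \<Rightarrow> 'a \<Rightarrow> 'a"
    and K :: "nat \<Rightarrow> nat \<Rightarrow> bool \<Rightarrow> 'a \<Rightarrow> 'a"
    and P :: "nat \<Rightarrow> nat \<Rightarrow> 'a \<Rightarrow> 'a \<Rightarrow> 'a"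
  assumes G: "cubical_omega_cat_conn C F D K P"
    and x: "x \<in> Phi F K P n ` C n"
    and m: "1 \<le> m" "m \<le> n"
  shows "F n m a x = degen1_iter D (n - m) (m - 1) (face1_iter F n m a x)
       \<and> D n m (F n m a x) = degen1_iter D (n - m) m (face1_iter F n m a x)"
proof -
  interpret cubical_omega_cat_conn C F D K P by (rule G)
  obtain y where y: "y \<in> C n" "x = Phi_upto F K P n m y"
    using x Phi_upto_add_mem[of _ n m "n - m"] m by (auto simp: Phi_def)
  then obtain z where z: "z \<in> C (n - m)" "F n m a x = degen1_iter D (n - m) (m - 1) z"
    using face_Phi_upto_degenerate[OF y(1) m] by blast
  have "face1_iter F n m a x = z"
    using face1_iter_eq_if_face_eq_degen1_iter[OF _ m z] Phi_upto_closed y m by simp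
  moreover have "D n m (degen1_iter D (n - m) (m - 1) z) = degen1_iter D (n - m) m z"
    using degen_degen1_iter[OF z(1), of "m - 1"] m by simp
  ultimately show ?thesis using z(2) by simp
qed

end
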